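(* Run xOrder with criterion $F=\widehat G_0$ (i.e. $\lambda=0$). Then the output $o^*(n^a,n^b)$ is a cross-group ordering that maximizes $\mathrm{AUC}(o)$ (equivalently $\mathrm{AUC}(o)-\lambda\Delta\mathrm{xAUC}(o)$ with $\lambda=0$) over all cross-group orderings $o$ of $\mathrm{p}^a$ and $\mathrm{p}^b$.
   Context: Setting: two disjoint finite groups $a$, $b$ of samples, each sample $u$ having label $Y_u\in\{0,1\}$; $n^a,n^b$ group sizes, $n_1^a,n_0^a$ numbers of label-1/label-0 samples in $a$ (similarly for $b$), all $\ge1$, $n_1=n_1^a+n_1^b$, $n_0=n_0^a+n_0^b$, $k=n_0n_1$, $k_{a,b}=n_1^an_0^b$, $k_{b,a}=n_0^an_1^b$. Fixed within-group rankings $\mathrm{p}^a=(\mathrm{p}^{a(1)},\dots,\mathrm{p}^{a(n^a)})$, $\mathrm{p}^b=(\mathrm{p}^{b(1)},\dots,\mathrm{p}^{b(n^b)})$. A cross-group ordering is a ranked list of all samples of $a\cup b$ whose restrictions to $a,b$ are $\mathrm{p}^a,\mathrm{p}^b$; $\mathrm{AUC}(o)=\frac1{n_1n_0}\#\{(u,v):Y_u=1,Y_v=0,u\text{ above }v\text{ in }o\}$; $\mathrm{xAUC}_o(a,b)$ is the fraction of pairs (label-1 sample of $a$, label-0 sample of $b$) in which the first is ranked above the second, $\mathrm{xAUC}_o(b,a)$ symmetrically, $\Delta\mathrm{xAUC}(o)=|\mathrm{xAUC}_o(a,b)-\mathrm{xAUC}_o(b,a)|$. Partial orderings: for $0\le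 i\le n^a$, $0\le j\le n^b$, an $(i,j)$-partial ordering is a ranked list of $\mathrm{p}^{a(1)},\dots,\mathrm{p}^{a(i)},\mathrm{p}^{b(1)},\dots,\mathrm{p}^{b(j)}$ preserving the within-group orders. For such $o$ define $H_{ab}(o)$ as the number of pairs $(k,h)$ with $1\le k\le i$, $1\le h\le n^b$, $Y_{\mathrm{p}^{a(k)}}=1$, $Y_{\mathrm{p}^{b(h)}}=0$, and either $h>j$ or ($h\le j$ and $\mathrm{p}^{a(k)}$ precedes $\mathrm{p}^{b(h)}$ in $o$); and $H_{ba}(o)$ as the number of pairs $(h,k)$ with $1\le h\le j$, $1\le k\le n^a$, $Y_{\mathrm{p}^{b(h)}}=1$, $Y_{\mathrm{p}^{a(k)}}=0$, and either $k>i$ or ($k\le i$ and $\mathrm{p}^{b(h)}$ precedes $\mathrm{p}^{a(k)}$ in $o$). For $\lambda\ge0$ set $\widehat G_\lambda(o)=H_{ab}(o)+H_{ba}(o)-\lambda k\,\big|H_{ab}(o)/k_{a,b}-H_{ba}(o)/k_{b,a}\big|$, and $\widehat G_\infty(o)=-\big|H_{ab}(o)/k_{a,b}-H_{ba}(o)/k_{b,a}\big|$. (For $(i,j)=(n^a,n^b)$, $H_{ab}=k_{a,b}\mathrm{xAUC}_o(a,b)$ and $H_{ba}=k_{b,a}\mathrm{xAUC}_o(b,a)$.) xOrder with criterion $F$: set $o^*(i,0)=(\mathrm{p}^{a(1)},\dots,\mathrm{p}^{a(i)})$ and $o^*(0,j)=(\mathrm{p}^{b(1)},\dots,\mathrm{p}^{b(j)})$;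 for $i=1,\dots,n^a$ and (inner loop) $j=1,\dots,n^b$, let $c_a=o^*(i-1,j)\oplus\mathrm{p}^{a(i)}$ and $c_b=o^*(i,j-1)\oplus\mathrm{p}^{b(j)}$, where $\oplus$ appends an element at the bottom of the list, and set $o^*(i,j)=c_a$ if $F(c_a)>F(c_b)$, otherwise $o^*(i,j)=c_b$. The output is $o^*(n^a,n^b)$. *)

theory Defs
  imports Complex_Main
begin

text \<open>Group a is set pa, group b is set pb, where
pa, pb are the fixed within-group rankings (index 0 = top). Labels: Y u = True means
label 1, Y u = False means label 0. In a list, earlier position = ranked higher.\<close>

definition precedes :: "'a list \<Rightarrow> 'a \<Rightarrow> 'a \<Rightarrow> bool" where
  "precedes o' u v \<longleftrightarrow> (\<exists>p q. p < q \<and> q < length o' \<and> o' ! p = u \<and> o' ! q = v)"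

definition cross_ordering :: "'a list \<Rightarrow> 'a list \<Rightarrow> 'a list \<Rightarrow> bool" where
  "cross_ordering pa pb o' \<longleftrightarrow>
     distinct o' \<and> set o' = set pa \<union> set pb \<and>
     filter (\<lambda>x. x \<in> set pa) o' = pa \<and> filter (\<lambda>x. x \<in> set pb) o' = pb"

definition n1 :: "('a \<Rightarrow> bool) \<Rightarrow> 'a list \<Rightarrow> 'a list \<Rightarrow> nat" where
  "n1 Y pa pb = card {u \<in> set pa \<union> set pb. Y u}"

definition n0 :: "('a \<Rightarrow> bool) \<Rightarrow> 'a list \<Rightarrow> 'a list \<Rightarrow> nat" where
  "n0 Y pa pb = card {u \<in> set pa \<union> set pb. \<not> Y u}"

definition AUC :: "('a \<Rightarrow> bool) \<Rightarrow> 'a list \<Rightarrow> 'a list \<Rightarrow> 'a list \<Rightarrow> real" where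
  "AUC Y pa pb o' =
     real (card {(u, v). u \<in> set o' \<and> v \<in> set o' \<and> Y u \<and> \<not> Y v \<and> precedes o' u v})
     / (real (n1 Y pa pb) * real (n0 Y pa pb))"

definition cnt1 :: "('a \<Rightarrow> bool) \<Rightarrow> 'a list \<Rightarrow> nat" where
  "cnt1 Y p = card {u \<in> set p. Y u}"

definition cnt0 :: "('a \<Rightarrow> bool) \<Rightarrow> 'a list \<Rightarrow> nat" where
  "cnt0 Y p = card {u \<in> set p. \<not> Y u}"

text \<open>H_ab and H_ba of an (i,j)-partial ordering o' (1-based indices k,h of the paper
become 0-based positions k-1, h-1 here).\<close>
definition H_ab :: "('a \<Rightarrow> bool) \<Rightarrow> 'a list \<Rightarrow> 'a list \<Rightarrow> nat \<Rightarrow> nat \<Rightarrow> 'a list \<Rightarrow> nat" where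
  "H_ab Y pa pb i j o' = card {(k, h). 1 \<le> k \<and> k \<le> i \<and> 1 \<le> h \<and> h \<le> length pb \<and>
      Y (pa ! (k - 1)) \<and> \<not> Y (pb ! (h - 1)) \<and>
      (h > j \<or> (h \<le> j \<and> precedes o' (pa ! (k - 1)) (pb ! (h - 1))))}"

definition H_ba :: "('a \<Rightarrow> bool) \<Rightarrow> 'a list \<Rightarrow> 'a list \<Rightarrow> nat \<Rightarrow> nat \<Rightarrow> 'a list \<Rightarrow> nat" where
  "H_ba Y pa pb i j o' = card {(h, k). 1 \<le> h \<and> h \<le> j \<and> 1 \<le> k \<and> k \<le> length pa \<and>
      Y (pb ! (h - 1)) \<and> \<not> Y (pa ! (k - 1)) \<and>
      (k > i \<or> (k \<le> i \<and> precedes o' (pb ! (h - 1)) (pa ! (k - 1))))}"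

definition G_hat :: "real \<Rightarrow> ('a \<Rightarrow> bool) \<Rightarrow> 'a list \<Rightarrow> 'a list \<Rightarrow> nat \<Rightarrow> nat \<Rightarrow> 'a list \<Rightarrow> real" where
  "G_hat lam Y pa pb i j o' =
     (let hab = real (H_ab Y pa pb i j o'); hba = real (H_ba Y pa pb i j o');
          k = real (n0 Y pa pb) * real (n1 Y pa pb);
          kab = real (cnt1 Y pa) * real (cnt0 Y pb);
          kba = real (cnt0 Y pa) * real (cnt1 Y pb)
      in hab + hba - lam * k * \<bar>hab / kab - hba / kba\<bar>)"

fun xorder_tab :: "(nat \<Rightarrow> nat \<Rightarrow> 'a list \<Rightarrow> real) \<Rightarrow> 'a list \<Rightarrow> 'a list \<Rightarrow> nat \<Rightarrow> nat \<Rightarrow> 'a list" where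
  "xorder_tab F pa pb 0 j = take j pb"
| "xorder_tab F pa pb (Suc i) 0 = take (Suc i) pa"
| "xorder_tab F pa pb (Suc i) (Suc j) =
     (let ca = xorder_tab F pa pb i (Suc j) @ [pa ! i];
          cb = xorder_tab F pa pb (Suc i) j @ [pb ! j]
      in if F (Suc i) (Suc j) ca > F (Suc i) (Suc j) cb then ca else cb)"

definition xOrder :: "(nat \<Rightarrow> nat \<Rightarrow> 'a list \<Rightarrow> real) \<Rightarrow> 'a list \<Rightarrow> 'a list \<Rightarrow> 'a list" where
  "xOrder F pa pb = xorder_tab F pa pb (length pa) (length pb)"

end

theory Submission
  imports Defs
begin

text \<open>With \<open>\<lambda> = 0\<close> the criterion is \<open>H_ab + H_ba\<close>. Appending the next sample of group a to an
  (i,j)-partial ordering adds to this count exactly the pairs it forms with the label-0 samples of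
  group b not yet placed; this gain depends on (i,j) only, not on the partial ordering. Hence the best
  (i,j)-partial ordering extends a best (i-1,j)- or (i,j-1)-partial ordering, and xOrder is an exact
  dynamic program for \<open>H_ab + H_ba\<close>. On complete orderings the number of correctly ranked
  (label 1, label 0) pairs is \<open>H_ab + H_ba\<close> plus the within-group counts, which are fixed by the
  rankings of the groups, so maximizing \<open>H_ab + H_ba\<close> maximizes the AUC.\<close>

lemma precedes_set: "precedes xs u v \<Longrightarrow> u \<in> set xs \<and> v \<in> set xs"
  by (auto simp: precedes_def)

lemma precedes_snoc: "precedes (xs @ [x]) u v \<longleftrightarrow> precedes xs u v \<or> (u \<in> set xs \<and> v = x)"
proof
  assume "precedes (xs @ [x]) u v"
  then obtain p q where pq: "p < q" "q < Suc (length xs)" "(xs @ [x]) ! p = u" "(xs @ [x]) ! q = v"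
    unfolding precedes_def by auto
  show "precedes xs u v \<or> (u \<in> set xs \<and> v = x)"
  proof (cases "q < length xs")
    case True
    then show ?thesis using pq unfolding precedes_def by (auto simp: nth_append)
  next
    case False
    then have "q = length xs" using pq by auto
    then show ?thesis using pq by (auto simp: nth_append)
  qed
next
  assume "precedes xs u v \<or> (u \<in> set xs \<and> v = x)"
  then show "precedes (xs @ [x]) u v"
  proof
    assume "precedes xs u v"
    then obtain p q where "p < q" "q < length xs" "xs ! p = u" "xs ! q = v"
      unfolding precedes_def by auto
    then show ?thesis unfolding precedes_def
      by (intro exI[of _ p] exI[of _ q]) (auto simp: nth_append)
  next
    assume "u \<in> set xs \<and> v = x"
    then obtain p where "p < length xs" "xs ! p = u" "v = x" by (auto simp: in_set_conv_nth)
    then show ?thesis unfolding precedes_def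
      by (intro exI[of _ p] exI[of _ "length xs"]) (auto simp: nth_append)
  qed
qed

lemma precedes_Cons: "precedes (x # xs) u v \<longleftrightarrow> (u = x \<and> v \<in> set xs) \<or> precedes xs u v"
proof
  assume "precedes (x # xs) u v"
  then obtain p q where pq: "p < q" "q < Suc (length xs)" "(x # xs) ! p = u" "(x # xs) ! q = v"
    unfolding precedes_def by auto
  show "(u = x \<and> v \<in> set xs) \<or> precedes xs u v"
  proof (cases p)
    case 0
    then show ?thesis using pq by (cases q) auto
  next
    case (Suc p')
    then obtain q' where "q = Suc q'" using pq by (cases q) auto
    then show ?thesis using pq Suc unfolding precedes_def by auto
  qed
next
  assume "(u = x \<and> v \<in> set xs) \<or> precedes xs u v"
  then show "precedes (x # xs) u v"
  proof
    assume "u = x \<and> v \<in> set xs"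
    then obtain q where "q < length xs" "xs ! q = v" "u = x" by (auto simp: in_set_conv_nth)
    then show ?thesis unfolding precedes_def
      by (intro exI[of _ 0] exI[of _ "Suc q"]) auto
  next
    assume "precedes xs u v"
    then obtain p q where "p < q" "q < length xs" "xs ! p = u" "xs ! q = v"
      unfolding precedes_def by auto
    then show ?thesis unfolding precedes_def
      by (intro exI[of _ "Suc p"] exI[of _ "Suc q"]) auto
  qed
qed

lemma precedes_filter: "P u \<Longrightarrow> P v \<Longrightarrow> precedes (filter P xs) u v \<longleftrightarrow> precedes xs u v"
  by (induction xs) (auto simp: precedes_Cons)

subsection \<open>Partial orderings\<close>

inductive partial_ordering :: "'a list \<Rightarrow> 'a list \<Rightarrow> nat \<Rightarrow> nat \<Rightarrow> 'a list \<Rightarrow> bool"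
  for pa pb where
  Nil: "partial_ordering pa pb 0 0 []"
| snoc_a: "partial_ordering pa pb i j o' \<Longrightarrow> i < length pa \<Longrightarrow>
    partial_ordering pa pb (Suc i) j (o' @ [pa ! i])"
| snoc_b: "partial_ordering pa pb i j o' \<Longrightarrow> j < length pb \<Longrightarrow>
    partial_ordering pa pb i (Suc j) (o' @ [pb ! j])"

lemma partial_ordering_swap: "partial_ordering pa pb i j o' \<Longrightarrow> partial_ordering pb pa j i o'"
  by (induction rule: partial_ordering.induct) (auto intro: partial_ordering.intros)

lemma partial_ordering_Suc_Suc_cases:
  assumes "partial_ordering pa pb (Suc i) (Suc j) o'"
  obtains o0 where "o' = o0 @ [pa ! i]" "partial_ordering pa pb i (Suc j) o0"
        | o0 where "o' = o0 @ [pb ! j]" "partial_ordering pa pb (Suc i) j o0"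
  using assms by (cases rule: partial_ordering.cases) auto

lemma partial_ordering_0_left: "partial_ordering pa pb 0 j o' \<longleftrightarrow> j \<le> length pb \<and> o' = take j pb"
proof
  show "partial_ordering pa pb 0 j o' \<Longrightarrow> j \<le> length pb \<and> o' = take j pb"
    by (induction "0::nat" j o' rule: partial_ordering.induct) (auto simp: take_Suc_conv_app_nth)
  show "j \<le> length pb \<and> o' = take j pb \<Longrightarrow> partial_ordering pa pb 0 j o'"
    by (induction j arbitrary: o')
      (auto simp: take_Suc_conv_app_nth intro: partial_ordering.intros)
qed

lemma partial_ordering_0_right: "partial_ordering pa pb i 0 o' \<longleftrightarrow> i \<le> length pa \<and> o' = take i pa"
  using partial_ordering_0_left[of pb pa i o'] partial_ordering_swap by blast

context
  fixes pa pb :: "'a list"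
  assumes distinct_pa: "distinct pa" and distinct_pb: "distinct pb"
    and disjoint: "set pa \<inter> set pb = {}"
begin

lemma partial_ordering_invariants:
  assumes "partial_ordering pa pb i j o'"
  shows "i \<le> length pa \<and> j \<le> length pb \<and> distinct o' \<and>
    set o' = set (take i pa) \<union> set (take j pb) \<and>
    filter (\<lambda>x. x \<in> set pa) o' = take i pa \<and> filter (\<lambda>x. x \<in> set pb) o' = take j pb"
  using assms
proof (induction rule: partial_ordering.induct)
  case Nil
  then show ?case by simp
next
  case (snoc_a i j o')
  have "pa ! i \<notin> set (take i pa)"
    using snoc_a distinct_pa by (simp add: in_set_conv_nth nth_eq_iff_index_eq)
  moreover have "pa ! i \<notin> set pb" using snoc_a disjoint by (auto dest: nth_mem)
  ultimately show ?case using snoc_a by (auto simp: take_Suc_conv_app_nth dest: in_set_takeD)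
next
  case (snoc_b i j o')
  have "pb ! j \<notin> set (take j pb)"
    using snoc_b distinct_pb by (simp add: in_set_conv_nth nth_eq_iff_index_eq)
  moreover have "pb ! j \<notin> set pa" using snoc_b disjoint by (auto dest: nth_mem)
  ultimately show ?case using snoc_b by (auto simp: take_Suc_conv_app_nth dest: in_set_takeD)
qed

lemma partial_ordering_if_filters:
  "set o' \<subseteq> set pa \<union> set pb \<Longrightarrow> filter (\<lambda>x. x \<in> set pa) o' = take i pa \<Longrightarrow>
    filter (\<lambda>x. x \<in> set pb) o' = take j pb \<Longrightarrow> i \<le> length pa \<Longrightarrow> j \<le> length pb \<Longrightarrow>
    partial_ordering pa pb i j o'"
proof (induction o' arbitrary: i j rule: rev_induct)
  case Nil
  then have "i = 0" "j = 0" by auto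
  then show ?case by (simp add: partial_ordering.Nil)
next
  case (snoc x o0)
  show ?case
  proof (cases "x \<in> set pa")
    case True
    then have "x \<notin> set pb" using disjoint by blast
    obtain i' where i': "i = Suc i'" using snoc.prems True by (cases i) auto
    then have i'_less: "i' < length pa" using snoc.prems by auto
    then have "filter (\<lambda>x. x \<in> set pa) o0 @ [x] = take i' pa @ [pa ! i']"
      using snoc.prems True i' by (simp add: take_Suc_conv_app_nth)
    then have "partial_ordering pa pb i' j o0" and "x = pa ! i'"
      using snoc.IH[of i' j] snoc.prems \<open>x \<notin> set pb\<close> i'_less by auto
    then show ?thesis using partial_ordering.snoc_a[OF _ i'_less] i' by auto
  next
    case False
    then have "x \<in> set pb" using snoc.prems by auto
    obtain j' where j': "j = Suc j'" using snoc.prems \<open>x \<in> set pb\<close> by (cases j) auto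
    then have j'_less: "j' < length pb" using snoc.prems by auto
    then have "filter (\<lambda>x. x \<in> set pb) o0 @ [x] = take j' pb @ [pb ! j']"
      using snoc.prems \<open>x \<in> set pb\<close> j' by (simp add: take_Suc_conv_app_nth)
    then have "partial_ordering pa pb i j' o0" and "x = pb ! j'"
      using snoc.IH[of i j'] snoc.prems False j'_less by auto
    then show ?thesis using partial_ordering.snoc_b[OF _ j'_less] j' by auto
  qed
qed

lemma cross_ordering_iff_partial_ordering:
  "cross_ordering pa pb o' \<longleftrightarrow> partial_ordering pa pb (length pa) (length pb) o'"
  using partial_ordering_invariants[of "length pa" "length pb" o']
    partial_ordering_if_filters[of o' "length pa" "length pb"]
  unfolding cross_ordering_def by auto

end

subsection \<open>Appending a sample to a partial ordering\<close>

definition pairs_with_unplaced_b :: "('a \<Rightarrow> bool) \<Rightarrow> 'a list \<Rightarrow> 'a list \<Rightarrow> nat \<Rightarrow> nat \<Rightarrow> (nat \<times> nat) set"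
  where "pairs_with_unplaced_b Y pa pb i j = {(k, h). k = Suc i \<and> j < h \<and> h \<le> length pb \<and>
    Y (pa ! i) \<and> \<not> Y (pb ! (h - 1))}"

lemma H_ba_eq_H_ab_swap: "H_ba Y pa pb i j o' = H_ab Y pb pa j i o'"
  by (simp add: H_ab_def H_ba_def)

context
  fixes pa pb :: "'a list" and Y :: "'a \<Rightarrow> bool" and i j :: nat and o' :: "'a list"
  assumes distinct_pa: "distinct pa" and distinct_pb: "distinct pb"
    and disjoint: "set pa \<inter> set pb = {}"
    and partial: "partial_ordering pa pb i j o'" and i_less: "i < length pa"
begin

lemma H_ab_snoc_a:
  "H_ab Y pa pb (Suc i) j (o' @ [pa ! i]) = H_ab Y pa pb i j o' + card (pairs_with_unplaced_b Y pa pb i j)"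
proof -
  have "pa ! i \<notin> set (take i pa)"
    using distinct_pa i_less by (simp add: in_set_conv_nth nth_eq_iff_index_eq)
  moreover have "pa ! i \<notin> set pb" using disjoint i_less by (auto dest: nth_mem)
  ultimately have new_not_placed: "pa ! i \<notin> set o'"
    using partial_ordering_invariants[OF distinct_pa distinct_pb disjoint partial]
    by (auto dest: in_set_takeD)
  have new_not_b: "pb ! (h - 1) \<noteq> pa ! i" if "1 \<le> h" "h \<le> length pb" for h
    using that disjoint i_less by (metis diff_less disjoint_iff le_less_trans less_one not_le nth_mem)
  let ?S = "\<lambda>i' o'. {(k, h). 1 \<le> k \<and> k \<le> i' \<and> 1 \<le> h \<and> h \<le> length pb \<and>
      Y (pa ! (k - 1)) \<and> \<not> Y (pb ! (h - 1)) \<and>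
      (h > j \<or> (h \<le> j \<and> precedes o' (pa ! (k - 1)) (pb ! (h - 1))))}"
  have split: "?S (Suc i) (o' @ [pa ! i]) = ?S i o' \<union> pairs_with_unplaced_b Y pa pb i j"
  proof (rule set_eqI, clarify)
    fix k h
    show "(k, h) \<in> ?S (Suc i) (o' @ [pa ! i]) \<longleftrightarrow> (k, h) \<in> ?S i o' \<union> pairs_with_unplaced_b Y pa pb i j"
      using new_not_placed new_not_b[of h]
      by (cases "k = Suc i") (auto simp: pairs_with_unplaced_b_def precedes_snoc dest: precedes_set)
  qed
  have "finite (?S i o')"
    by (rule finite_subset[of _ "{1..i} \<times> {1..length pb}"]) auto
  moreover have "finite (pairs_with_unplaced_b Y pa pb i j)"
    by (rule finite_subset[of _ "{Suc i} \<times> {1..length pb}"]) (auto simp: pairs_with_unplaced_b_def)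
  moreover have "?S i o' \<inter> pairs_with_unplaced_b Y pa pb i j = {}"
    by (auto simp: pairs_with_unplaced_b_def)
  ultimately show ?thesis unfolding H_ab_def split by (simp add: card_Un_disjoint)
qed

lemma H_ba_snoc_a: "H_ba Y pa pb (Suc i) j (o' @ [pa ! i]) = H_ba Y pa pb i j o'"
  unfolding H_ba_def
proof (rule arg_cong[where f = card], rule set_eqI, clarify)
  have placed_b: "pb ! (h - 1) \<in> set o'" if "1 \<le> h" "h \<le> j" for h
  proof -
    have "pb ! (h - 1) = take j pb ! (h - 1)" "h - 1 < length (take j pb)"
      using that partial_ordering_invariants[OF distinct_pa distinct_pb disjoint partial] by auto
    then show ?thesis
      using partial_ordering_invariants[OF distinct_pa distinct_pb disjoint partial] by (metis Un_iff nth_mem)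
  qed
  have other_a: "pa ! (k - 1) \<noteq> pa ! i" if "1 \<le> k" "k \<le> i" for k
    using that distinct_pa i_less by (simp add: nth_eq_iff_index_eq)
  fix h k
  show "(h, k) \<in> {(h, k). 1 \<le> h \<and> h \<le> j \<and> 1 \<le> k \<and> k \<le> length pa \<and>
      Y (pb ! (h - 1)) \<and> \<not> Y (pa ! (k - 1)) \<and>
      (Suc i < k \<or> k \<le> Suc i \<and> precedes (o' @ [pa ! i]) (pb ! (h - 1)) (pa ! (k - 1)))} \<longleftrightarrow>
    (h, k) \<in> {(h, k). 1 \<le> h \<and> h \<le> j \<and> 1 \<le> k \<and> k \<le> length pa \<and>
      Y (pb ! (h - 1)) \<and> \<not> Y (pa ! (k - 1)) \<and>
      (i < k \<or> k \<le> i \<and> precedes o' (pb ! (h - 1)) (pa ! (k - 1)))}"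
    using placed_b[of h] other_a[of k] by (cases "k = Suc i") (auto simp: precedes_snoc)
qed

end

definition cross_pairs :: "('a \<Rightarrow> bool) \<Rightarrow> 'a list \<Rightarrow> 'a list \<Rightarrow> nat \<Rightarrow> nat \<Rightarrow> 'a list \<Rightarrow> nat"
  where "cross_pairs Y pa pb i j o' = H_ab Y pa pb i j o' + H_ba Y pa pb i j o'"

lemma G_hat_0: "G_hat 0 Y pa pb i j o' = real (cross_pairs Y pa pb i j o')"
  by (simp add: G_hat_def cross_pairs_def Let_def)

lemma cross_pairs_swap: "cross_pairs Y pa pb i j o' = cross_pairs Y pb pa j i o'"
  by (simp add: cross_pairs_def H_ba_eq_H_ab_swap)

lemma cross_pairs_snoc_a:
  assumes "distinct pa" "distinct pb" "set pa \<inter> set pb = {}"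
    and "partial_ordering pa pb i j o'" "i < length pa"
  shows "cross_pairs Y pa pb (Suc i) j (o' @ [pa ! i]) =
    cross_pairs Y pa pb i j o' + card (pairs_with_unplaced_b Y pa pb i j)"
  using H_ab_snoc_a[OF assms] H_ba_snoc_a[OF assms] by (simp add: cross_pairs_def)

lemma cross_pairs_snoc_b:
  assumes "distinct pa" "distinct pb" "set pa \<inter> set pb = {}"
    and "partial_ordering pa pb i j o'" "j < length pb"
  shows "cross_pairs Y pa pb i (Suc j) (o' @ [pb ! j]) =
    cross_pairs Y pa pb i j o' + card (pairs_with_unplaced_b Y pb pa j i)"
  using cross_pairs_snoc_a[OF assms(2,1) _ partial_ordering_swap[OF assms(4)] assms(5), of Y] assms(3)
  by (simp add: cross_pairs_swap[of Y pa] Int_commute)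

subsection \<open>Optimality of the dynamic program\<close>

lemma cross_pairs_Suc_Suc_le_max:
  assumes "distinct pa" "distinct pb" "set pa \<inter> set pb = {}"
    and partial: "partial_ordering pa pb (Suc i) (Suc j) o'"
    and ra: "partial_ordering pa pb i (Suc j) ra"
    and ra_opt: "\<And>o0. partial_ordering pa pb i (Suc j) o0 \<Longrightarrow>
      cross_pairs Y pa pb i (Suc j) o0 \<le> cross_pairs Y pa pb i (Suc j) ra"
    and rb: "partial_ordering pa pb (Suc i) j rb"
    and rb_opt: "\<And>o0. partial_ordering pa pb (Suc i) j o0 \<Longrightarrow>
      cross_pairs Y pa pb (Suc i) j o0 \<le> cross_pairs Y pa pb (Suc i) j rb"
  shows "cross_pairs Y pa pb (Suc i) (Suc j) o' \<le>
    max (cross_pairs Y pa pb (Suc i) (Suc j) (ra @ [pa ! i]))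
        (cross_pairs Y pa pb (Suc i) (Suc j) (rb @ [pb ! j]))"
proof -
  have i: "i < length pa" and j: "j < length pb"
    using partial_ordering_invariants[OF assms(1-3) partial] by auto
  from partial show ?thesis
  proof (cases rule: partial_ordering_Suc_Suc_cases)
    case (1 o0)
    then show ?thesis
      using cross_pairs_snoc_a[OF assms(1-3) _ i] ra ra_opt[of o0] by fastforce
  next
    case (2 o0)
    then show ?thesis
      using cross_pairs_snoc_b[OF assms(1-3) _ j] rb rb_opt[of o0] by fastforce
  qed
qed

lemma xorder_tab_maximizes_cross_pairs:
  assumes "F = G_hat 0 Y pa pb" "distinct pa" "distinct pb" "set pa \<inter> set pb = {}"
    and "i \<le> length pa" "j \<le> length pb"
  shows "partial_ordering pa pb i j (xorder_tab F pa pb i j) \<and>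
    (\<forall>o'. partial_ordering pa pb i j o' \<longrightarrow>
      cross_pairs Y pa pb i j o' \<le> cross_pairs Y pa pb i j (xorder_tab F pa pb i j))"
  using assms
proof (induction F pa pb i j rule: xorder_tab.induct)
  case (1 F pa pb j)
  then show ?case by (simp add: partial_ordering_0_left)
next
  case (2 F pa pb i)
  then show ?case by (simp add: partial_ordering_0_right)
next
  case (3 F pa pb i j)
  let ?ra = "xorder_tab F pa pb i (Suc j)" and ?rb = "xorder_tab F pa pb (Suc i) j"
  let ?cp = "cross_pairs Y pa pb (Suc i) (Suc j)"
  have ra: "partial_ordering pa pb i (Suc j) ?ra"
    and rb: "partial_ordering pa pb (Suc i) j ?rb"
    using "3.IH" "3.prems" by auto
  have "xorder_tab F pa pb (Suc i) (Suc j) =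
    (if ?cp (?ra @ [pa ! i]) > ?cp (?rb @ [pb ! j]) then ?ra @ [pa ! i] else ?rb @ [pb ! j])"
    using "3.prems"(1) by (simp add: Let_def G_hat_0)
  moreover have "partial_ordering pa pb (Suc i) (Suc j) (?ra @ [pa ! i])"
    and "partial_ordering pa pb (Suc i) (Suc j) (?rb @ [pb ! j])"
    using ra rb "3.prems" by (auto intro: partial_ordering.intros)
  moreover have "?cp o' \<le> max (?cp (?ra @ [pa ! i])) (?cp (?rb @ [pb ! j]))"
    if "partial_ordering pa pb (Suc i) (Suc j) o'" for o'
    using cross_pairs_Suc_Suc_le_max[OF "3.prems"(2-4) that ra _ rb] "3.IH" "3.prems" by auto
  ultimately show ?case by (auto simp: max_def)
qed

subsection \<open>Counting correctly ranked pairs\<close>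

definition correct_pairs :: "('a \<Rightarrow> bool) \<Rightarrow> 'a set \<Rightarrow> 'a set \<Rightarrow> 'a list \<Rightarrow> ('a \<times> 'a) set"
  where "correct_pairs Y A B xs = {(u, v). u \<in> A \<and> v \<in> B \<and> Y u \<and> \<not> Y v \<and> precedes xs u v}"

lemma finite_correct_pairs: "finite A \<Longrightarrow> finite B \<Longrightarrow> finite (correct_pairs Y A B xs)"
  by (rule finite_subset[of _ "A \<times> B"]) (auto simp: correct_pairs_def)

lemma AUC_eq_card_correct_pairs:
  "AUC Y pa pb o' = real (card (correct_pairs Y (set o') (set o') o')) / (real (n1 Y pa pb) * real (n0 Y pa pb))"
  by (simp add: AUC_def correct_pairs_def)

lemma correct_pairs_filter:
  "filter (\<lambda>x. x \<in> A) xs = p \<Longrightarrow> correct_pairs Y A A xs = correct_pairs Y A A p"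
  using precedes_filter[of "\<lambda>x. x \<in> A" _ _ xs] by (auto simp: correct_pairs_def)

lemma card_correct_pairs_eq_H_ab:
  assumes "distinct pa" "distinct pb"
  shows "card (correct_pairs Y (set pa) (set pb) o') = H_ab Y pa pb (length pa) (length pb) o'"
proof -
  let ?H = "{(k, h). 1 \<le> k \<and> k \<le> length pa \<and> 1 \<le> h \<and> h \<le> length pb \<and>
      Y (pa ! (k - 1)) \<and> \<not> Y (pb ! (h - 1)) \<and>
      (h > length pb \<or> (h \<le> length pb \<and> precedes o' (pa ! (k - 1)) (pb ! (h - 1))))}"
  let ?f = "\<lambda>(k, h). (pa ! (k - 1), pb ! (h - 1))"
  have inj: "inj_on ?f ?H"
    unfolding inj_on_def using assms by (auto simp: nth_eq_iff_index_eq)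
  have image: "?f ` ?H = correct_pairs Y (set pa) (set pb) o'"
  proof
    show "?f ` ?H \<subseteq> correct_pairs Y (set pa) (set pb) o'"
      by (auto simp: correct_pairs_def)
    show "correct_pairs Y (set pa) (set pb) o' \<subseteq> ?f ` ?H"
    proof (rule subrelI)
      fix u v assume "(u, v) \<in> correct_pairs Y (set pa) (set pb) o'"
      then have uv: "u \<in> set pa" "v \<in> set pb" "Y u" "\<not> Y v" "precedes o' u v"
        by (auto simp: correct_pairs_def)
      obtain p where p: "p < length pa" "pa ! p = u" using uv by (auto simp: in_set_conv_nth)
      obtain q where q: "q < length pb" "pb ! q = v" using uv by (auto simp: in_set_conv_nth)
      have "(Suc p, Suc q) \<in> ?H" using p q uv by auto
      then show "(u, v) \<in> ?f ` ?H" by (rule rev_image_eqI) (simp add: p q)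
    qed
  qed
  show ?thesis unfolding H_ab_def using card_image[OF inj] image by simp
qed

lemma card_correct_pairs_cross_ordering:
  assumes "distinct pa" "distinct pb" "set pa \<inter> set pb = {}" "cross_ordering pa pb o'"
  shows "card (correct_pairs Y (set o') (set o') o') =
    card (correct_pairs Y (set pa) (set pa) pa) + card (correct_pairs Y (set pb) (set pb) pb) +
    cross_pairs Y pa pb (length pa) (length pb) o'"
proof -
  let ?C = "\<lambda>A B. correct_pairs Y A B o'" and ?A = "set pa" and ?B = "set pb"
  have "set o' = ?A \<union> ?B" using assms(4) by (simp add: cross_ordering_def)
  then have "?C (set o') (set o') = (?C ?A ?A \<union> ?C ?B ?B) \<union> (?C ?A ?B \<union> ?C ?B ?A)"
    by (auto simp: correct_pairs_def)
  moreover have "?C ?A ?A \<inter> ?C ?B ?B = {}" "?C ?A ?B \<inter> ?C ?B ?A = {}"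
    "(?C ?A ?A \<union> ?C ?B ?B) \<inter> (?C ?A ?B \<union> ?C ?B ?A) = {}"
    using assms(3) by (auto simp: correct_pairs_def)
  ultimately have "card (?C (set o') (set o')) =
      card (?C ?A ?A) + card (?C ?B ?B) + (card (?C ?A ?B) + card (?C ?B ?A))"
    by (simp add: card_Un_disjoint finite_correct_pairs)
  moreover have "?C ?A ?A = correct_pairs Y ?A ?A pa" "?C ?B ?B = correct_pairs Y ?B ?B pb"
    using assms(4) correct_pairs_filter[of ?A o' pa] correct_pairs_filter[of ?B o' pb]
    by (simp_all add: cross_ordering_def)
  ultimately show ?thesis
    using card_correct_pairs_eq_H_ab[OF assms(1,2)] card_correct_pairs_eq_H_ab[OF assms(2,1)]
    by (simp add: cross_pairs_def H_ba_eq_H_ab_swap)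
qed

theorem theorem1:
  fixes pa pb :: "'a list" and Y :: "'a \<Rightarrow> bool"
  assumes "distinct pa" and "distinct pb" and "set pa \<inter> set pb = {}"
    and "cnt1 Y pa \<ge> 1" and "cnt0 Y pa \<ge> 1" and "cnt1 Y pb \<ge> 1" and "cnt0 Y pb \<ge> 1"
  shows "cross_ordering pa pb (xOrder (G_hat 0 Y pa pb) pa pb) \<and>
         (\<forall>o'. cross_ordering pa pb o' \<longrightarrow>
                AUC Y pa pb o' \<le> AUC Y pa pb (xOrder (G_hat 0 Y pa pb) pa pb))"
proof -
  let ?r = "xOrder (G_hat 0 Y pa pb) pa pb"
  note optimal = xorder_tab_maximizes_cross_pairs[OF refl assms(1-3) order_refl order_refl, of Y]
  have cross_r: "cross_ordering pa pb ?r"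
    using optimal cross_ordering_iff_partial_ordering[OF assms(1-3)] by (simp add: xOrder_def)
  have "AUC Y pa pb o' \<le> AUC Y pa pb ?r" if cross: "cross_ordering pa pb o'" for o'
  proof -
    have "cross_pairs Y pa pb (length pa) (length pb) o' \<le> cross_pairs Y pa pb (length pa) (length pb) ?r"
      using optimal cross cross_ordering_iff_partial_ordering[OF assms(1-3)] by (simp add: xOrder_def)
    then have "card (correct_pairs Y (set o') (set o') o') \<le> card (correct_pairs Y (set ?r) (set ?r) ?r)"
      using card_correct_pairs_cross_ordering[OF assms(1-3)] cross cross_r by simp
    then show ?thesis unfolding AUC_eq_card_correct_pairs by (simp add: divide_right_mono)
  qed
  then show ?thesis using cross_r by blast
qed

end
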